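(* Let $U\le\mathbb{F}_q^k$ be a subspace with $\dim U=k-\ell$, and let $\mathcal{P}=\{x+U:x\in\mathbb{F}_q^k\}$ be its coset partition. If $$\big|\{e_i+U:\ i\in[k],\ e_i\notin U\}\big|=\ell,$$ where $e_i$ is the $i$-th standard basis vector, then the partition graph $G_{\mathcal{P}}$ contains a clique of size $q^{\ell}$ (i.e., containing exactly one vector from each coset of $U$).
   Context: $d$ is Hamming distance; for distinct blocks $d(P,P')=\min_{u\in P,v\in P'}d(u,v)$. The partition graph $G_{\mathcal{P}}$ of a partition $\mathcal{P}$ of $\mathbb{F}_q^k$ has vertex set $\mathbb{F}_q^k$, and vertices $u\in P$, $v\in P'$ (blocks of $\mathcal{P}$) are adjacent iff $P\ne P'$ and $d(u,v)=d(P,P')$. *)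

theory Defs
  imports "HOL-Analysis.Analysis"
begin

text \<open>Vectors of F_q^k are modelled as 'a ^ 'n with 'a a finite field
  (q = CARD('a)) and 'n a finite index type (k = CARD('n)).\<close>

definition hamming :: "'a ^ 'n \<Rightarrow> 'a ^ 'n \<Rightarrow> nat" where
  "hamming u v = card {i. u $ i \<noteq> v $ i}"

definition block_dist :: "('a ^ 'n) set \<Rightarrow> ('a ^ 'n) set \<Rightarrow> nat" where
  "block_dist P P' = Min {hamming u v | u v. u \<in> P \<and> v \<in> P'}"

definition partition_graph_adj :: "('a ^ 'n) set set \<Rightarrow> 'a ^ 'n \<Rightarrow> 'a ^ 'n \<Rightarrow> bool" where
  "partition_graph_adj \<P> u v \<longleftrightarrow>
     (\<exists>P\<in>\<P>. \<exists>P'\<in>\<P>. P \<noteq> P' \<and> u \<in> P \<and> v \<in> P' \<and> hamming u v = block_dist P P')"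

definition is_clique :: "('a \<Rightarrow> 'a \<Rightarrow> bool) \<Rightarrow> 'a set \<Rightarrow> bool" where
  "is_clique E C \<longleftrightarrow> (\<forall>u\<in>C. \<forall>v\<in>C. u \<noteq> v \<longrightarrow> E u v)"

definition coset :: "'a ^ 'n \<Rightarrow> ('a::ab_group_add ^ 'n) set \<Rightarrow> ('a ^ 'n) set" where
  "coset x U = (\<lambda>u. x + u) ` U"

definition coset_partition :: "('a::ab_group_add ^ 'n) set \<Rightarrow> ('a ^ 'n) set set" where
  "coset_partition U = {coset x U | x. True}"

definition std_basis :: "'n \<Rightarrow> 'a::field ^ 'n" where
  "std_basis i = axis i 1"

end

theory Submission
  imports Defs
begin

text \<open>Choose one index from each class of the standard basis vectors \<open>e\<^sub>j \<notin> U\<close> modulo \<open>U\<close>: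
  this gives a set \<open>I\<close> of \<open>\<ell>\<close> indices and a map \<open>\<sigma>\<close> with \<open>e\<^sub>j \<equiv> e\<^sub>\<sigma>\<^sub>j (mod U)\<close>.
  The linear map \<open>\<pi>\<close> sending \<open>e\<^sub>j\<close> to \<open>e\<^sub>\<sigma>\<^sub>j\<close> (and to \<open>0\<close> if \<open>e\<^sub>j \<in> U\<close>) lands in the
  coordinate subspace \<open>C\<close> supported on \<open>I\<close>, satisfies \<open>\<pi> w \<equiv> w (mod U)\<close>, and does not
  increase the Hamming weight. So \<open>C + U\<close> is the whole space, and as \<open>dim C = \<ell>\<close> a
  dimension count makes \<open>C\<close> a complement of \<open>U\<close>: it meets every coset exactly once and
  has \<open>q\<^sup>\<ell>\<close> elements. For \<open>u \<noteq> v\<close> in \<open>C\<close> and any \<open>x \<in> u + U\<close>, \<open>y \<in> v + U\<close>, the vector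
  \<open>\<pi> (x - y)\<close> is the element of \<open>C\<close> congruent to \<open>u - v\<close>, i.e. \<open>u - v\<close> itself; hence
  \<open>d(u, v) \<le> d(x, y)\<close>, so \<open>u\<close> and \<open>v\<close> realise the distance between their cosets.\<close>

definition hamming_weight :: "'a::zero ^ 'n \<Rightarrow> nat" where
  "hamming_weight x = card {i. x $ i \<noteq> 0}"

lemma hamming_eq_hamming_weight_diff:
  fixes u v :: "'a::ab_group_add ^ 'n"
  shows "hamming u v = hamming_weight (u - v)"
  unfolding hamming_def hamming_weight_def by simp

lemma std_basis_nth: "std_basis i $ j = (if j = i then 1 else 0)"
  unfolding std_basis_def axis_def by simp

lemma inj_std_basis: "inj (std_basis :: 'n \<Rightarrow> 'a::field ^ 'n)"
  unfolding std_basis_def by (auto simp: inj_on_def axis_eq_axis)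

lemma sum_std_basis_expansion:
  fixes x :: "'a::field ^ 'n::finite"
  shows "(\<Sum>i\<in>UNIV. x $ i *s std_basis i) = x"
  unfolding std_basis_def by (rule basis_expansion)

lemma mem_coset_iff: "y \<in> coset x U \<longleftrightarrow> y - x \<in> U"
  unfolding coset_def by (auto simp: image_iff intro: bexI[where x = "y - x"])

lemma self_mem_coset: "vec.subspace U \<Longrightarrow> x \<in> coset x U"
  by (simp add: mem_coset_iff vec.subspace_0)

lemma coset_eq_iff:
  assumes "vec.subspace U"
  shows "coset x U = coset y U \<longleftrightarrow> x - y \<in> U"
proof
  assume "coset x U = coset y U"
  then show "x - y \<in> U" using self_mem_coset[OF assms, of x] by (simp add: mem_coset_iff)
next
  assume xy: "x - y \<in> U"
  have "z - x \<in> U \<longleftrightarrow> z - y \<in> U" for z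
    using vec.subspace_add[OF assms _ xy, of "z - x"] vec.subspace_diff[OF assms _ xy, of "z - y"]
    by auto
  then show "coset x U = coset y U" by (auto simp: mem_coset_iff)
qed

lemma block_dist_eqI:
  fixes P P' :: "('a ^ 'n::finite) set"
  assumes "u \<in> P" "v \<in> P'" "\<And>x y. x \<in> P \<Longrightarrow> y \<in> P' \<Longrightarrow> hamming u v \<le> hamming x y"
  shows "block_dist P P' = hamming u v"
proof -
  have "{hamming x y | x y. x \<in> P \<and> y \<in> P'} \<subseteq> {..CARD('n)}"
    by (auto simp: hamming_def card_mono)
  then have "finite {hamming x y | x y. x \<in> P \<and> y \<in> P'}"
    by (rule finite_subset) simp
  then show ?thesis
    unfolding block_dist_def by (rule Min_eqI) (use assms in auto)
qed

definition coord_subspace :: "'n set \<Rightarrow> ('a::zero ^ 'n) set" where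
  "coord_subspace I = {x. \<forall>i. i \<notin> I \<longrightarrow> x $ i = 0}"

lemma subspace_coord_subspace: "vec.subspace (coord_subspace I)"
  unfolding vec.subspace_def coord_subspace_def by simp

lemma coord_subspace_eq_span:
  "coord_subspace I = vec.span (std_basis ` I :: ('a::field ^ 'n::finite) set)"
  (is "?C = ?S")
proof
  show "?S \<subseteq> ?C"
    by (rule vec.span_minimal[OF _ subspace_coord_subspace])
       (auto simp: coord_subspace_def std_basis_nth)
  show "?C \<subseteq> ?S"
  proof
    fix x :: "'a ^ 'n"
    assume x: "x \<in> coord_subspace I"
    have "x = (\<Sum>i\<in>UNIV. x $ i *s std_basis i)" by (simp add: sum_std_basis_expansion)
    also have "\<dots> = (\<Sum>i\<in>I. x $ i *s std_basis i)"
      by (rule sum.mono_neutral_right) (use x in \<open>auto simp: coord_subspace_def\<close>)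
    also have "\<dots> \<in> vec.span (std_basis ` I)"
      by (intro vec.span_sum vec.span_scale vec.span_base) auto
    finally show "x \<in> vec.span (std_basis ` I)" .
  qed
qed

lemma dim_coord_subspace:
  "vec.dim (coord_subspace I :: ('a::field ^ 'n::finite) set) = card I"
proof -
  have "vec.independent (std_basis ` I :: ('a ^ 'n) set)"
    by (rule vec.independent_mono[OF independent_cart_basis])
       (auto simp: cart_basis_def std_basis_def)
  then show ?thesis
    using card_image[OF inj_on_subset[OF inj_std_basis]]
    by (simp add: coord_subspace_eq_span vec.dim_eq_card_independent)
qed

lemma card_coord_subspace:
  "card (coord_subspace I :: ('a::{finite,zero} ^ 'n::finite) set) = CARD('a) ^ card I"
proof -
  have "bij_betw (\<lambda>x. restrict (($) x) I) (coord_subspace I) (I \<rightarrow>\<^sub>E (UNIV :: 'a set))"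
    by (rule bij_betw_byWitness[where f' = "\<lambda>f. \<chi> i. if i \<in> I then f i else 0"])
       (auto simp: coord_subspace_def vec_eq_iff PiE_def extensional_def fun_eq_iff)
  then show ?thesis by (simp add: bij_betw_same_card card_PiE)
qed

definition push_coords :: "'n set \<Rightarrow> ('n \<Rightarrow> 'n) \<Rightarrow> 'a::field ^ 'n \<Rightarrow> 'a ^ 'n" where
  "push_coords J \<sigma> w = (\<Sum>j\<in>J. w $ j *s std_basis (\<sigma> j))"

lemma push_coords_nth:
  fixes w :: "'a::field ^ 'n::finite"
  shows "push_coords J \<sigma> w $ i = (\<Sum>j | j \<in> J \<and> \<sigma> j = i. w $ j)"
proof -
  have "push_coords J \<sigma> w $ i = (\<Sum>j\<in>J. if \<sigma> j = i then w $ j else 0)"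
    unfolding push_coords_def by (auto simp: std_basis_nth intro: sum.cong)
  then show ?thesis by (simp add: sum.inter_filter)
qed

lemma push_coords_in_coord_subspace:
  fixes w :: "'a::field ^ 'n::finite"
  assumes "\<sigma> ` J \<subseteq> I"
  shows "push_coords J \<sigma> w \<in> coord_subspace I"
  using assms by (auto simp: coord_subspace_def push_coords_nth intro!: sum.neutral)

lemma hamming_weight_push_coords_le:
  fixes w :: "'a::field ^ 'n::finite"
  shows "hamming_weight (push_coords J \<sigma> w) \<le> hamming_weight w"
proof -
  have "{i. push_coords J \<sigma> w $ i \<noteq> 0} \<subseteq> \<sigma> ` {j. w $ j \<noteq> 0}"
  proof
    fix i
    assume "i \<in> {i. push_coords J \<sigma> w $ i \<noteq> 0}"
    then obtain j where "j \<in> J" "\<sigma> j = i" "w $ j \<noteq> 0"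
      unfolding push_coords_nth by (auto elim: sum.not_neutral_contains_not_neutral)
    then show "i \<in> \<sigma> ` {j. w $ j \<noteq> 0}" by blast
  qed
  then have "card {i. push_coords J \<sigma> w $ i \<noteq> 0} \<le> card (\<sigma> ` {j. w $ j \<noteq> 0})"
    by (intro card_mono) auto
  also have "\<dots> \<le> card {j. w $ j \<noteq> 0}" by (rule card_image_le) simp
  finally show ?thesis unfolding hamming_weight_def .
qed

lemma diff_push_coords_in_subspace:
  fixes w :: "'a::field ^ 'n::finite"
  assumes U: "vec.subspace U"
    and outside_J: "\<And>j. j \<notin> J \<Longrightarrow> std_basis j \<in> U"
    and inside_J: "\<And>j. j \<in> J \<Longrightarrow> std_basis j - std_basis (\<sigma> j) \<in> U"
  shows "w - push_coords J \<sigma> w \<in> U"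
proof -
  have "push_coords J \<sigma> w = (\<Sum>j\<in>UNIV. w $ j *s (if j \<in> J then std_basis (\<sigma> j) else 0))"
    unfolding push_coords_def by (simp add: if_distrib sum.If_cases)
  then have "w - push_coords J \<sigma> w
      = (\<Sum>j\<in>UNIV. w $ j *s (std_basis j - (if j \<in> J then std_basis (\<sigma> j) else 0)))"
    by (simp add: sum_std_basis_expansion vector_ssub_ldistrib sum_subtractf)
  also have "\<dots> \<in> U"
    using outside_J inside_J by (intro vec.subspace_sum[OF U] vec.subspace_scale[OF U]) auto
  finally show ?thesis .
qed

lemma subspace_Int_eq_zero_if_dim_add:
  fixes C U :: "('a::field ^ 'n::finite) set"
  assumes C: "vec.subspace C" and U: "vec.subspace U"
    and spanning: "\<And>w. \<exists>c\<in>C. w - c \<in> U"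
    and dim: "vec.dim C + vec.dim U = CARD('n)"
  shows "C \<inter> U = {0}"
proof -
  have sums: "{c + u | c u. c \<in> C \<and> u \<in> U} = UNIV"
  proof (intro set_eqI iffI UNIV_I)
    fix w :: "'a ^ 'n"
    obtain c where "c \<in> C" "w - c \<in> U" using spanning by blast
    moreover have "w = c + (w - c)" by simp
    ultimately show "w \<in> {c + u | c u. c \<in> C \<and> u \<in> U}" by blast
  qed
  have "vec.dim (UNIV :: ('a ^ 'n) set) + vec.dim (C \<inter> U) = vec.dim C + vec.dim U"
    using vec.dim_sums_Int[OF C U] unfolding sums .
  moreover have "vec.dim (UNIV :: ('a ^ 'n) set) = CARD('n)"
    by (simp add: card_cart_basis)
  ultimately have "vec.dim (C \<inter> U) = 0"
    using dim by linarith
  then have "C \<inter> U \<subseteq> {0}" by (simp only: vec.dim_eq_0)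
  then show ?thesis using vec.subspace_0[OF C] vec.subspace_0[OF U] by blast
qed

lemma eq_if_diff_in_complement:
  assumes C: "vec.subspace C" and CU: "C \<inter> U = {0}"
    and "c \<in> C" "d \<in> C" "c - d \<in> U"
  shows "c = d"
proof -
  have "c - d \<in> C \<inter> U"
    using vec.subspace_diff[OF C \<open>c \<in> C\<close> \<open>d \<in> C\<close>] \<open>c - d \<in> U\<close> by blast
  then show ?thesis using CU by simp
qed

lemma card_complement_Int_coset:
  assumes C: "vec.subspace C" and U: "vec.subspace U" and CU: "C \<inter> U = {0}"
    and spanning: "\<And>w. \<exists>c\<in>C. w - c \<in> U"
    and P: "P \<in> coset_partition U"
  shows "card (C \<inter> P) = 1"
proof -
  obtain x where x: "P = coset x U" using P unfolding coset_partition_def by blast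
  obtain c where c: "c \<in> C" "x - c \<in> U" using spanning by blast
  have "C \<inter> P = {c}"
  proof (intro equalityI subsetI)
    fix d
    assume d: "d \<in> C \<inter> P"
    then have "d - x \<in> U" by (simp add: x mem_coset_iff)
    then have "(d - x) + (x - c) \<in> U" by (rule vec.subspace_add[OF U _ c(2)])
    then have "d - c \<in> U" by (simp add: algebra_simps)
    then show "d \<in> {c}"
      using eq_if_diff_in_complement[OF C CU] d c(1) by simp
  next
    fix d
    assume "d \<in> {c}"
    then show "d \<in> C \<inter> P"
      using vec.subspace_neg[OF U c(2)] c(1) by (simp add: x mem_coset_iff)
  qed
  then show ?thesis by simp
qed

lemma is_clique_complement:
  fixes U C :: "('a::field ^ 'n::finite) set"
  assumes C: "vec.subspace C" and U: "vec.subspace U" and CU: "C \<inter> U = {0}"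
    and \<pi>_in: "\<And>w. \<pi> w \<in> C" and diff_\<pi>_in: "\<And>w. w - \<pi> w \<in> U"
    and hamming_weight_\<pi>_le: "\<And>w. hamming_weight (\<pi> w) \<le> hamming_weight w"
  shows "is_clique (partition_graph_adj (coset_partition U)) C"
  unfolding is_clique_def
proof (intro ballI impI)
  fix u v
  assume u: "u \<in> C" and v: "v \<in> C" and "u \<noteq> v"
  have blocks: "coset u U \<in> coset_partition U" "coset v U \<in> coset_partition U"
    unfolding coset_partition_def by blast+
  have distinct: "coset u U \<noteq> coset v U"
    using eq_if_diff_in_complement[OF C CU u v] \<open>u \<noteq> v\<close> coset_eq_iff[OF U] by blast
  have "hamming u v \<le> hamming x y" if "x \<in> coset u U" "y \<in> coset v U" for x y
  proof -
    have "x - u \<in> U" "y - v \<in> U" using that by (simp_all add: mem_coset_iff)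
    then have "(x - u) - (y - v) - ((x - y) - \<pi> (x - y)) \<in> U"
      using vec.subspace_diff[OF U] diff_\<pi>_in by blast
    also have "(x - u) - (y - v) - ((x - y) - \<pi> (x - y)) = \<pi> (x - y) - (u - v)"
      by (simp add: algebra_simps)
    finally have "\<pi> (x - y) - (u - v) \<in> U" .
    then have "\<pi> (x - y) = u - v"
      by (rule eq_if_diff_in_complement[OF C CU \<pi>_in vec.subspace_diff[OF C u v]])
    then show ?thesis
      using hamming_weight_\<pi>_le[of "x - y"] by (simp add: hamming_eq_hamming_weight_diff)
  qed
  then have "block_dist (coset u U) (coset v U) = hamming u v"
    by (intro block_dist_eqI self_mem_coset[OF U])
  then show "partition_graph_adj (coset_partition U) u v"
    unfolding partition_graph_adj_def using blocks distinct self_mem_coset[OF U] by metis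
qed

lemma obtain_image_representatives:
  obtains I \<sigma> where "card I = card (f ` A)" "\<And>j. j \<in> A \<Longrightarrow> \<sigma> j \<in> I \<and> f j = f (\<sigma> j)"
proof
  show "card (inv_into A f ` f ` A) = card (f ` A)"
    by (rule card_image) (simp add: inj_on_inv_into)
  show "inv_into A f (f j) \<in> inv_into A f ` f ` A \<and> f j = f (inv_into A f (f j))" if "j \<in> A" for j
    using that by (simp add: f_inv_into_f)
qed

theorem lemma6:
  fixes U :: "('a::{finite,field} ^ 'n::finite) set" and l :: nat
  assumes "vec.subspace U"
    and "vec.dim U + l = CARD('n)"
    and "card {coset (std_basis i) U | i. std_basis i \<notin> U} = l"
  shows "\<exists>C. is_clique (partition_graph_adj (coset_partition U)) C
              \<and> card C = CARD('a) ^ l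
              \<and> (\<forall>P\<in>coset_partition U. card (C \<inter> P) = 1)"
proof -
  define J where "J = {j. std_basis j \<notin> U}"
  have "{coset (std_basis i) U | i. std_basis i \<notin> U} = (\<lambda>i. coset (std_basis i) U) ` J"
    unfolding J_def by blast
  then obtain I \<sigma> where card_I: "card I = l"
    and \<sigma>: "\<And>j. j \<in> J \<Longrightarrow> \<sigma> j \<in> I \<and> coset (std_basis j) U = coset (std_basis (\<sigma> j)) U"
    using obtain_image_representatives[of "\<lambda>i. coset (std_basis i) U" J] assms(3) by metis
  define C :: "('a ^ 'n) set" where "C = coord_subspace I"
  define \<pi> :: "'a ^ 'n \<Rightarrow> 'a ^ 'n" where "\<pi> = push_coords J \<sigma>"
  have C: "vec.subspace C" unfolding C_def by (rule subspace_coord_subspace)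
  have \<pi>_in: "\<pi> w \<in> C" for w
    unfolding \<pi>_def C_def using \<sigma> by (intro push_coords_in_coord_subspace) blast
  have diff_\<pi>_in: "w - \<pi> w \<in> U" for w
    unfolding \<pi>_def using assms(1) \<sigma>
    by (intro diff_push_coords_in_subspace) (auto simp: J_def coset_eq_iff)
  have spanning: "\<exists>c\<in>C. w - c \<in> U" for w
    using \<pi>_in diff_\<pi>_in by blast
  have "vec.dim C + vec.dim U = CARD('n)"
    using assms(2) card_I by (simp add: C_def dim_coord_subspace)
  then have CU: "C \<inter> U = {0}"
    by (rule subspace_Int_eq_zero_if_dim_add[OF C assms(1) spanning])
  have "is_clique (partition_graph_adj (coset_partition U)) C"
    using is_clique_complement[OF C assms(1) CU \<pi>_in diff_\<pi>_in] hamming_weight_push_coords_le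
    unfolding \<pi>_def by blast
  moreover have "card C = CARD('a) ^ l"
    using card_I by (simp add: C_def card_coord_subspace)
  ultimately show ?thesis
    using card_complement_Int_coset[OF C assms(1) CU spanning] by blast
qed

end
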